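(* Let $f:\mathbb N\to\mathbb R_{\ge0}$ be a multiplicative function with $(1\star f)(n)\le n$ for all $n\ge1$. Then for any $M\in\mathbb N$, real $t\geq 1$, $K\in\mathbb R$ and $C>0$, $$\sum_{\substack{mn=M \\ \lvert\{ p\leq t \text{ prime}: p\mid m \}\rvert \geq K}} f(n) \ll_C M e^{-CK}(\operatorname{Log} t)^{e^{C}-1},$$ where the sum is over pairs of positive integers $(m,n)$ with $mn=M$, and the implied constant depends only on $C$.
   Context: $(1\star f)(n)=\sum_{d\mid n}f(d)$. $\operatorname{Log} t=\max\{1,\log t\}$. *)

theory Defs
  imports Complex_Main "HOL-Computational_Algebra.Primes"
begin

definition multiplicative :: "(nat \<Rightarrow> real) \<Rightarrow> bool" where
  "multiplicative f \<longleftrightarrow> f 1 = 1 \<and>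
     (\<forall>m n. m > 0 \<longrightarrow> n > 0 \<longrightarrow> coprime m n \<longrightarrow> f (m * n) = f m * f n)"

definition one_conv :: "(nat \<Rightarrow> real) \<Rightarrow> nat \<Rightarrow> real" where
  "one_conv f n = (\<Sum>d\<in>{d. d dvd n}. f d)"

definition Log :: "real \<Rightarrow> real" where
  "Log t = max 1 (ln t)"

end

theory Submission
  imports Defs "HOL-Analysis.Harmonic_Numbers"
begin

text \<open>
  Let \<open>\<omega>(n)\<close> be the number of primes \<open>p \<le> t\<close> dividing \<open>M / n\<close>. Rankin's trick bounds the
  indicator of \<open>\<omega>(n) \<ge> K\<close> by \<open>exp (C (\<omega>(n) - K))\<close>. Writing \<open>exp C = 1 + a\<close>, the power
  \<open>(1 + a) ^ \<omega>(n)\<close> is the sum of \<open>a ^ card S\<close> over the sets \<open>S\<close> of primes \<open>p \<le> t\<close> dividing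
  \<open>M / n\<close>. Summing over \<open>n\<close> first, for fixed \<open>S\<close> the \<open>n\<close> range over the divisors of \<open>M / \<Prod>S\<close>,
  so the inner sum is \<open>(1 \<star> f)(M / \<Prod>S) \<le> M / \<Prod>S\<close>. What remains is \<open>exp (-CK) M\<close> times the
  product of \<open>1 + a / p \<le> exp (a / p)\<close> over \<open>p \<le> t\<close>, and Mertens' estimate
  \<open>\<Sum> 1 / p \<le> ln (Log t) + O(1)\<close>, obtained from Chebyshev's bound \<open>\<Prod>\<^bsub>p \<le> n\<^esub> p \<le> 4 ^ n\<close> by partial
  summation, turns this into \<open>Log t powr (exp C - 1)\<close>.
\<close>

section \<open>Chebyshev's bound\<close>

lemma prime_powers_prod_dvd:
  fixes x :: nat
  assumes "finite S" "\<And>p. p \<in> S \<Longrightarrow> prime p" "\<And>p. p \<in> S \<Longrightarrow> p ^ e p dvd x"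
  shows "(\<Prod>p\<in>S. p ^ e p) dvd x"
  using assms
proof (induction S rule: finite_induct)
  case empty
  then show ?case by simp
next
  case (insert p S)
  have "coprime (p ^ e p) (\<Prod>q\<in>S. q ^ e q)"
  proof (rule prod_coprime_right)
    fix q assume "q \<in> S"
    then have "coprime p q"
      using insert by (metis insert_iff primes_coprime)
    then show "coprime (p ^ e p) (q ^ e q)" by simp
  qed
  with insert show ?case by (simp add: divides_mult)
qed

lemma prod_primes_dvd_iff:
  fixes m :: nat
  assumes "finite S" "\<And>p. p \<in> S \<Longrightarrow> prime p"
  shows "\<Prod>S dvd m \<longleftrightarrow> (\<forall>p\<in>S. p dvd m)"
  using prime_powers_prod_dvd[OF assms, of "\<lambda>_. 1" m] dvd_prodI[OF assms(1), of _ "\<lambda>x. x"]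
  by (auto intro: dvd_trans)

lemma primes_in_upper_half_prod_dvd_binomial:
  "\<Prod>{p::nat. prime p \<and> m + 1 < p \<and> p \<le> 2 * m + 1} dvd (2 * m + 1) choose m"
proof (subst prod_primes_dvd_iff, safe)
  fix p :: nat
  assume p: "prime p" "m + 1 < p" "p \<le> 2 * m + 1"
  have "fact (2 * m + 1) = fact m * fact (m + 1) * ((2 * m + 1) choose m)"
    using binomial_fact_lemma[of m "2 * m + 1"] by (simp add: ac_simps)
  moreover have "p dvd fact (2 * m + 1)" "\<not> p dvd fact m" "\<not> p dvd fact (m + 1)"
    using p prime_dvd_fact_iff[OF p(1)] by (auto simp del: fact_Suc)
  ultimately show "p dvd (2 * m + 1) choose m"
    using p(1) by (auto simp: prime_dvd_mult_iff)
qed auto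

lemma binomial_odd_middle_le_four_pow: "(2 * m + 1) choose m \<le> 4 ^ m"
proof -
  have "((2 * m + 1) choose m) + ((2 * m + 1) choose (m + 1)) = (\<Sum>k\<in>{m, m + 1}. (2 * m + 1) choose k)"
    by simp
  also have "\<dots> \<le> (\<Sum>k\<le>2 * m + 1. (2 * m + 1) choose k)"
    by (rule sum_mono2) auto
  also have "\<dots> = 2 ^ (2 * m + 1)"
    by (rule choose_row_sum)
  also have "\<dots> = 2 * 4 ^ m"
    by (simp add: power_mult)
  finally show ?thesis
    using binomial_symmetric[of m "2 * m + 1"] by simp
qed

lemma primorial_le_four_pow: "\<Prod>{p::nat. prime p \<and> p \<le> n} \<le> 4 ^ n"
proof (induction n rule: less_induct)
  case (less n)
  consider "n \<le> 2" | "n > 2" "even n" | "n > 2" "odd n"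
    by linarith
  then show ?case
  proof cases
    case 1
    then have "{p::nat. prime p \<and> p \<le> n} = (if n = 2 then {2} else {})"
      by (auto dest: prime_ge_2_nat)
    then show ?thesis
      using 1 by auto
  next
    case 2
    have "p \<le> n \<longleftrightarrow> p \<le> n - 1" if "prime p" for p :: nat
      using that 2 prime_odd_nat[of n] by (cases "p = n") auto
    then have "\<Prod>{p::nat. prime p \<and> p \<le> n} = \<Prod>{p. prime p \<and> p \<le> n - 1}"
      by metis
    also have "\<dots> \<le> 4 ^ (n - 1)"
      using less[of "n - 1"] 2 by simp
    also have "\<dots> \<le> 4 ^ n"
      by (rule power_increasing) auto
    finally show ?thesis .
  next
    case 3
    then obtain m where m: "n = 2 * m + 1"
      using oddE by blast
    with 3 have "m \<ge> 1"
      by simp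
    let ?A = "{p::nat. prime p \<and> p \<le> m + 1}"
    let ?B = "{p::nat. prime p \<and> m + 1 < p \<and> p \<le> 2 * m + 1}"
    have "\<Prod>{p::nat. prime p \<and> p \<le> n} = \<Prod>?A * \<Prod>?B"
      unfolding m by (subst prod.union_disjoint[symmetric]) (auto intro: prod.cong)
    also have "\<dots> \<le> 4 ^ (m + 1) * 4 ^ m"
    proof (rule mult_le_mono)
      show "\<Prod>?A \<le> 4 ^ (m + 1)"
        using less[of "m + 1"] m \<open>m \<ge> 1\<close> by simp
      have "\<Prod>?B \<le> (2 * m + 1) choose m"
        by (rule dvd_imp_le[OF primes_in_upper_half_prod_dvd_binomial]) simp
      also have "\<dots> \<le> 4 ^ m"
        by (rule binomial_odd_middle_le_four_pow)
      finally show "\<Prod>?B \<le> 4 ^ m" .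
    qed
    also have "\<dots> = 4 ^ n"
      unfolding m by (simp add: power_add mult_2)
    finally show ?thesis .
  qed
qed

section \<open>Mertens' bounds\<close>

lemma sum_ln_primes_le: "(\<Sum>p | prime p \<and> p \<le> n. ln (real p)) \<le> real n * ln 4"
proof -
  have "(\<Sum>p | prime p \<and> p \<le> n. ln (real p)) = ln (real (\<Prod>{p. prime p \<and> p \<le> n}))"
    unfolding of_nat_prod by (subst ln_prod) (auto dest: prime_gt_0_nat)
  also have "\<dots> \<le> ln (real (4 ^ n))"
  proof (rule ln_mono)
    show "real (\<Prod>{p. prime p \<and> p \<le> n}) \<le> real (4 ^ n)"
      by (simp only: of_nat_le_iff primorial_le_four_pow)
    show "0 < real (\<Prod>{p. prime p \<and> p \<le> n})"
      by (simp only: of_nat_0_less_iff) (auto intro!: prod_pos dest: prime_gt_0_nat)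
  qed
  also have "\<dots> = real n * ln 4"
    by (simp add: ln_realpow)
  finally show ?thesis .
qed

lemma power_div_dvd_fact:
  fixes p n :: nat
  assumes "p > 0"
  shows "p ^ (n div p) dvd fact n"
proof -
  have "p ^ (n div p) = (\<Prod>j\<in>{1..n div p}. p)"
    by simp
  also have "\<dots> dvd (\<Prod>j\<in>{1..n div p}. j * p)"
    by (rule prod_dvd_prod) simp
  also have "\<dots> = \<Prod>((\<lambda>j. j * p) ` {1..n div p})"
    using assms by (simp add: prod.reindex inj_on_def)
  also have "\<dots> dvd \<Prod>{1..n}"
    using assms by (intro prod_dvd_prod_subset) (auto simp: less_eq_div_iff_mult_less_eq)
  also have "\<dots> = fact n"
    by (simp add: fact_prod)
  finally show ?thesis .
qed

lemma sum_div_ln_primes_le: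
  "(\<Sum>p | prime p \<and> p \<le> n. real (n div p) * ln (real p)) \<le> real n * ln (real n)"
proof (cases "n = 0")
  case False
  let ?P = "{p. prime p \<and> p \<le> n}"
  have "(\<Prod>p\<in>?P. p ^ (n div p)) dvd fact n"
    by (intro prime_powers_prod_dvd power_div_dvd_fact) (auto dest: prime_gt_0_nat)
  then have "(\<Prod>p\<in>?P. p ^ (n div p)) \<le> fact n"
    by (rule dvd_imp_le) simp
  also have "\<dots> \<le> n ^ n"
    using fact_le_power[of n, where 'a=nat] by (simp only: of_nat_id)
  finally have "real (\<Prod>p\<in>?P. p ^ (n div p)) \<le> real (n ^ n)"
    by (simp only: of_nat_le_iff)
  then have "ln (real (\<Prod>p\<in>?P. p ^ (n div p))) \<le> ln (real (n ^ n))"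
    by (rule ln_mono) (simp only: of_nat_0_less_iff, auto intro!: prod_pos dest: prime_gt_0_nat)
  moreover have "ln (real (\<Prod>p\<in>?P. p ^ (n div p))) = (\<Sum>p\<in>?P. real (n div p) * ln (real p))"
    unfolding of_nat_prod of_nat_power by (subst ln_prod) (auto simp: ln_realpow dest: prime_gt_0_nat)
  ultimately show ?thesis
    using False by (simp add: ln_realpow)
qed simp

lemma mertens_first_upper_nat:
  assumes "n \<ge> 1"
  shows "(\<Sum>p | prime p \<and> p \<le> n. ln (real p) / real p) \<le> ln (real n) + ln 4"
proof -
  let ?P = "{p. prime p \<and> p \<le> n}"
  have "real n * (\<Sum>p\<in>?P. ln (real p) / real p) - (\<Sum>p\<in>?P. ln (real p))
      = (\<Sum>p\<in>?P. (real n / real p - 1) * ln (real p))"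
    by (simp add: sum_distrib_left sum_subtractf algebra_simps)
  also have "\<dots> \<le> (\<Sum>p\<in>?P. real (n div p) * ln (real p))"
  proof (rule sum_mono)
    fix p assume "p \<in> ?P"
    then have p: "p > 0"
      by (auto dest: prime_gt_0_nat)
    have "real n = real p * real (n div p) + real (n mod p)" "real (n mod p) < real p"
      using p by (simp_all flip: of_nat_mult of_nat_add)
    then have "real n / real p - 1 \<le> real (n div p)"
      using p by (simp add: field_simps)
    then show "(real n / real p - 1) * ln (real p) \<le> real (n div p) * ln (real p)"
      using p by (intro mult_right_mono) auto
  qed
  also have "\<dots> \<le> real n * ln (real n)"
    by (rule sum_div_ln_primes_le)
  finally have "real n * (\<Sum>p\<in>?P. ln (real p) / real p) \<le> real n * (ln (real n) + ln 4)"
    using sum_ln_primes_le[of n] by (simp only: distrib_left)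
  then show ?thesis
    using assms by simp
qed

lemma mertens_first_upper:
  assumes "x \<ge> 1"
  shows "(\<Sum>p | prime p \<and> real p \<le> x. ln (real p) / real p) \<le> ln x + ln 4"
proof -
  define n where "n = nat \<lfloor>x\<rfloor>"
  have primes_eq: "{p. prime p \<and> real p \<le> x} = {p. prime p \<and> p \<le> n}"
    using assms by (auto simp: n_def le_nat_iff le_floor_iff)
  have n: "n \<ge> 1" "real n \<le> x"
    unfolding n_def using assms by linarith+
  then have "ln (real n) \<le> ln x"
    by (intro ln_mono) auto
  then show ?thesis
    unfolding primes_eq using mertens_first_upper_nat[OF n(1)] by linarith
qed

lemma one_div_eq_telescoping:
  assumes "1 \<le> m" "m \<le> J"
  shows "1 / real m = 1 / real J + (\<Sum>j\<in>{m..<J}. 1 / (real j * (real j + 1)))"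
proof -
  have "(\<Sum>j\<in>{m..<J}. 1 / (real j * (real j + 1)))
      = (\<Sum>j = m..<J. - 1 / real (Suc j) - - 1 / real j)"
    using assms(1) by (intro sum.cong) (auto simp: field_simps)
  also have "\<dots> = 1 / real m - 1 / real J"
    using sum_Suc_diff'[OF assms(2), of "\<lambda>j. - 1 / real j"] by simp
  finally show ?thesis
    by simp
qed

lemma sum_div_eq_partial_sums:
  fixes w :: "'a \<Rightarrow> real" and m :: "'a \<Rightarrow> nat"
  assumes "finite Q" "\<And>p. p \<in> Q \<Longrightarrow> 1 \<le> m p \<and> m p \<le> J"
  shows "(\<Sum>p\<in>Q. w p / real (m p)) = (\<Sum>p\<in>Q. w p) / real J
           + (\<Sum>j\<in>{1..<J}. (\<Sum>p | p \<in> Q \<and> m p \<le> j. w p) / (real j * (real j + 1)))"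
proof -
  have "w p / real (m p) = w p / real J
          + (\<Sum>j\<in>{1..<J}. if m p \<le> j then w p / (real j * (real j + 1)) else 0)"
    if "p \<in> Q" for p
  proof -
    have "{m p..<J} = {j\<in>{1..<J}. m p \<le> j}"
      using assms(2)[OF that] by auto
    then have "w p / real (m p) = w p / real J
          + (\<Sum>j\<in>{j\<in>{1..<J}. m p \<le> j}. w p / (real j * (real j + 1)))"
      using one_div_eq_telescoping[of "m p" J] assms(2)[OF that]
      by (simp add: sum_distrib_left divide_inverse distrib_left)
    then show ?thesis
      by (simp only: sum.inter_filter[OF finite_atLeastLessThan])
  qed
  then have "(\<Sum>p\<in>Q. w p / real (m p)) = (\<Sum>p\<in>Q. w p / real J)
      + (\<Sum>p\<in>Q. \<Sum>j\<in>{1..<J}. if m p \<le> j then w p / (real j * (real j + 1)) else 0)"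
    by (simp add: sum.distrib)
  also have "\<dots> = (\<Sum>p\<in>Q. w p / real J)
      + (\<Sum>j\<in>{1..<J}. \<Sum>p\<in>Q. if m p \<le> j then w p / (real j * (real j + 1)) else 0)"
    by (subst sum.swap) (rule refl)
  also have "\<dots> = (\<Sum>p\<in>Q. w p) / real J
      + (\<Sum>j\<in>{1..<J}. (\<Sum>p | p \<in> Q \<and> m p \<le> j. w p) / (real j * (real j + 1)))"
    using assms(1) by (simp add: sum_divide_distrib sum.inter_filter[symmetric] Collect_conj_eq)
  finally show ?thesis .
qed

lemma sum_div_le_harm_by_partial_sums:
  fixes w :: "'a \<Rightarrow> real" and m :: "'a \<Rightarrow> nat"
  assumes "finite Q" "\<And>p. p \<in> Q \<Longrightarrow> 1 \<le> m p \<and> m p \<le> J"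
    and partial: "\<And>j. 1 \<le> j \<Longrightarrow> j \<le> J \<Longrightarrow> (\<Sum>p | p \<in> Q \<and> m p \<le> j. w p) \<le> real j + c"
    and "c \<ge> 0"
  shows "(\<Sum>p\<in>Q. w p / real (m p)) \<le> harm J + c"
proof (cases "J = 0")
  case True
  then show ?thesis
    using assms(2) \<open>c \<ge> 0\<close> by (cases "Q = {}") (auto simp: harm_def)
next
  case False
  have "(\<Sum>p\<in>Q. w p) = (\<Sum>p | p \<in> Q \<and> m p \<le> J. w p)"
    using assms(2) by (intro sum.cong) auto
  also have "\<dots> \<le> real J + c"
    using False partial[of J] by simp
  finally have "(\<Sum>p\<in>Q. w p) / real J \<le> (real J + c) / real J"
    by (rule divide_right_mono) simp
  also have "\<dots> = 1 + c / real J"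
    using False by (simp add: field_simps)
  finally have "(\<Sum>p\<in>Q. w p) / real J \<le> 1 + c / real J" .
  moreover have "(\<Sum>j\<in>{1..<J}. (\<Sum>p | p \<in> Q \<and> m p \<le> j. w p) / (real j * (real j + 1)))
      \<le> (\<Sum>j\<in>{1..<J}. 1 / (real j + 1) + c / (real j * (real j + 1)))"
  proof (rule sum_mono)
    fix j assume "j \<in> {1..<J}"
    then have "(\<Sum>p | p \<in> Q \<and> m p \<le> j. w p) / (real j * (real j + 1))
        \<le> (real j + c) / (real j * (real j + 1))"
      using partial[of j] by (intro divide_right_mono) auto
    also have "\<dots> = 1 / (real j + 1) + c / (real j * (real j + 1))"
      using \<open>j \<in> {1..<J}\<close> by (simp add: add_divide_distrib)
    finally show "(\<Sum>p | p \<in> Q \<and> m p \<le> j. w p) / (real j * (real j + 1))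
        \<le> 1 / (real j + 1) + c / (real j * (real j + 1))" .
  qed
  moreover have "(\<Sum>j\<in>{1..<J}. 1 / (real j + 1)) = harm J - 1"
    using False by (simp add: harm_altdef atLeast0LessThan[symmetric] sum.atLeast_Suc_lessThan inverse_eq_divide add.commute)
  moreover have "(\<Sum>j\<in>{1..<J}. c / (real j * (real j + 1))) = c - c / real J"
  proof -
    have "(\<Sum>j\<in>{1..<J}. 1 / (real j * (real j + 1))) = 1 - 1 / real J"
      using one_div_eq_telescoping[of 1 J] False by simp
    then have "c * (\<Sum>j\<in>{1..<J}. 1 / (real j * (real j + 1))) = c - c / real J"
      by (simp add: right_diff_distrib)
    then show ?thesis
      by (simp add: sum_distrib_left)
  qed
  ultimately show ?thesis
    using sum_div_eq_partial_sums[OF assms(1,2), where w = w] by (simp add: sum.distrib)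
qed

lemma finite_primes_le: "finite {p. prime p \<and> real p \<le> t}"
  by (rule finite_subset[of _ "{..nat \<lfloor>t\<rfloor>}"]) (auto simp: le_nat_iff le_floor_iff)

lemma harm_floor_ln_le:
  assumes "t \<ge> 1"
  shows "harm (nat \<lfloor>ln t\<rfloor>) \<le> 1 + ln (Log t)"
proof (cases "nat \<lfloor>ln t\<rfloor> = 0")
  case False
  have "harm (nat \<lfloor>ln t\<rfloor>) \<le> 1 + ln (real (nat \<lfloor>ln t\<rfloor>))"
    using euler_mascheroni_sequence_decreasing[of 1 "nat \<lfloor>ln t\<rfloor>"] False by (simp add: harm_def)
  also have "ln (real (nat \<lfloor>ln t\<rfloor>)) \<le> ln (Log t)"
    using False assms unfolding Log_def by (intro ln_mono) linarith+
  finally show ?thesis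
    by simp
qed (simp add: harm_def Log_def)

lemma sum_ln_div_primes_floor_ln_le:
  "(\<Sum>p | prime p \<and> real p \<le> t \<and> nat \<lfloor>ln (real p)\<rfloor> \<le> j. ln (real p) / real p) \<le> real j + 3"
proof -
  have "{p. prime p \<and> real p \<le> t \<and> nat \<lfloor>ln (real p)\<rfloor> \<le> j} \<subseteq> {p. prime p \<and> real p \<le> exp (real j + 1)}"
  proof safe
    fix p :: nat assume p: "prime p" "nat \<lfloor>ln (real p)\<rfloor> \<le> j"
    then have "real p > 1"
      using prime_gt_1_nat by auto
    then have "ln (real p) \<le> real j + 1"
      using p(2) by linarith
    with \<open>real p > 1\<close> show "real p \<le> exp (real j + 1)"
      by (metis exp_le_cancel_iff exp_ln less_trans zero_less_one)
  qed
  then have "(\<Sum>p | prime p \<and> real p \<le> t \<and> nat \<lfloor>ln (real p)\<rfloor> \<le> j. ln (real p) / real p)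
      \<le> (\<Sum>p | prime p \<and> real p \<le> exp (real j + 1). ln (real p) / real p)"
    by (intro sum_mono2 finite_primes_le) (auto dest: prime_gt_0_nat)
  also have "\<dots> \<le> real j + 1 + ln 4"
    using mertens_first_upper[of "exp (real j + 1)"] by simp
  also have "ln 4 = 2 * ln (2 :: real)"
    using ln_realpow[of 2 2] by simp
  finally show ?thesis
    using ln_2_less_1 by simp
qed

text \<open>The restriction \<open>p \<ge> 3\<close> ensures \<open>\<lfloor>ln p\<rfloor> \<ge> 1\<close>, as partial summation against
  \<open>1 / \<lfloor>ln p\<rfloor>\<close> requires.\<close>
lemma sum_inverse_primes_ge_3_le:
  assumes "t \<ge> 1"
  shows "(\<Sum>p | prime p \<and> real p \<le> t \<and> 3 \<le> p. 1 / real p) \<le> harm (nat \<lfloor>ln t\<rfloor>) + 3"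
proof -
  define Q where "Q = {p. prime p \<and> real p \<le> t \<and> 3 \<le> p}"
  define m where "m p = nat \<lfloor>ln (real p)\<rfloor>" for p :: nat
  have "finite Q"
    unfolding Q_def by (rule finite_subset[OF _ finite_primes_le]) auto
  have m: "1 \<le> m p \<and> m p \<le> nat \<lfloor>ln t\<rfloor>" "real (m p) \<le> ln (real p)" "real p > 0"
    if "p \<in> Q" for p
  proof -
    have "exp 1 \<le> real p"
      using that exp_le unfolding Q_def by fastforce
    then have "1 \<le> ln (real p)"
      using ln_mono[OF _ exp_gt_zero] by fastforce
    moreover have "ln (real p) \<le> ln t"
      using that unfolding Q_def by auto
    ultimately show "1 \<le> m p \<and> m p \<le> nat \<lfloor>ln t\<rfloor>" "real (m p) \<le> ln (real p)"
      unfolding m_def by linarith+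
    show "real p > 0"
      using that by (simp add: Q_def)
  qed
  have partial: "(\<Sum>p | p \<in> Q \<and> m p \<le> j. ln (real p) / real p) \<le> real j + 3" for j
  proof -
    have "(\<Sum>p | p \<in> Q \<and> m p \<le> j. ln (real p) / real p)
        \<le> (\<Sum>p | prime p \<and> real p \<le> t \<and> m p \<le> j. ln (real p) / real p)"
      by (intro sum_mono2 finite_subset[OF _ finite_primes_le[of t]]) (auto simp: Q_def dest: prime_gt_0_nat)
    then show ?thesis
      using sum_ln_div_primes_floor_ln_le[of t j] unfolding m_def by linarith
  qed
  have "(\<Sum>p\<in>Q. 1 / real p) \<le> (\<Sum>p\<in>Q. (ln (real p) / real p) / real (m p))"
  proof (rule sum_mono)
    fix p assume p: "p \<in> Q"
    have "1 / real p = (real (m p) / real p) / real (m p)"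
      using m[OF p] by simp
    also have "\<dots> \<le> (ln (real p) / real p) / real (m p)"
      using m[OF p] by (intro divide_right_mono) auto
    finally show "1 / real p \<le> (ln (real p) / real p) / real (m p)" .
  qed
  also have "\<dots> \<le> harm (nat \<lfloor>ln t\<rfloor>) + 3"
    using sum_div_le_harm_by_partial_sums[OF \<open>finite Q\<close> m(1) partial] by simp
  finally show ?thesis
    unfolding Q_def .
qed

lemma mertens_second_upper:
  assumes "t \<ge> 1"
  shows "(\<Sum>p | prime p \<and> real p \<le> t. 1 / real p) \<le> ln (Log t) + 5"
proof -
  let ?Q = "{p. prime p \<and> real p \<le> t \<and> 3 \<le> p}"
  have "finite ?Q"
    by (rule finite_subset[OF _ finite_primes_le]) auto
  have "(\<Sum>p | prime p \<and> real p \<le> t. 1 / real p) \<le> (\<Sum>p\<in>insert 2 ?Q. 1 / real p)"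
    using \<open>finite ?Q\<close> by (intro sum_mono2) (auto dest: prime_ge_2_nat)
  also have "\<dots> = 1 / 2 + (\<Sum>p\<in>?Q. 1 / real p)"
    using \<open>finite ?Q\<close> by simp
  also have "\<dots> \<le> 1 / 2 + (1 + ln (Log t)) + 3"
    using sum_inverse_primes_ge_3_le[OF assms] harm_floor_ln_le[OF assms] by simp
  finally show ?thesis
    by simp
qed

lemma prod_one_plus_div_primes_le:
  assumes "a \<ge> 0" "t \<ge> 1"
  shows "(\<Prod>p | prime p \<and> real p \<le> t. 1 + a / real p) \<le> exp (5 * a) * Log t powr a"
proof -
  have "(\<Prod>p | prime p \<and> real p \<le> t. 1 + a / real p) \<le> (\<Prod>p | prime p \<and> real p \<le> t. exp (a / real p))"
    using assms(1) by (intro prod_mono) (auto simp: exp_ge_add_one_self)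
  also have "\<dots> = exp (a * (\<Sum>p | prime p \<and> real p \<le> t. 1 / real p))"
    by (simp add: exp_sum finite_primes_le sum_distrib_left)
  also have "\<dots> \<le> exp (a * (ln (Log t) + 5))"
    using mertens_second_upper[OF assms(2)] assms(1) by (simp add: mult_left_mono)
  also have "\<dots> = exp (5 * a) * Log t powr a"
    by (simp add: powr_def Log_def exp_add algebra_simps)
  finally show ?thesis .
qed

section \<open>Divisor sums\<close>

lemma dvd_and_dvd_div_iff:
  fixes M d n :: nat
  assumes "M > 0"
  shows "n dvd M \<and> d dvd M div n \<longleftrightarrow> d dvd M \<and> n dvd M div d"
proof -
  have *: "x dvd M \<and> y dvd M div x \<longleftrightarrow> y * x dvd M" for x y
    using assms by (metis dvd_div_iff_mult dvd_mult_right dvd_0_left_iff not_gr0)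
  show ?thesis
    using *[of n d] *[of d n] by (simp add: mult.commute)
qed

lemma sum_divisors_of_quotient_le:
  fixes f :: "nat \<Rightarrow> real"
  assumes conv: "\<And>k. k \<ge> 1 \<Longrightarrow> one_conv f k \<le> real k" and "M > 0" "d > 0"
  shows "(\<Sum>n | n dvd M \<and> d dvd M div n. f n) \<le> real M / real d"
proof (cases "d dvd M")
  case True
  then have "{n. n dvd M \<and> d dvd M div n} = {n. n dvd M div d}"
    using dvd_and_dvd_div_iff[OF \<open>M > 0\<close>] by blast
  moreover have "M div d \<ge> 1"
    using True \<open>M > 0\<close> by (auto elim!: dvdE)
  ultimately show ?thesis
    using conv[of "M div d"] True by (simp add: one_conv_def real_of_nat_div)
next
  case False
  then have "{n. n dvd M \<and> d dvd M div n} = {}"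
    using dvd_and_dvd_div_iff[OF \<open>M > 0\<close>] by blast
  then show ?thesis
    by (simp only: sum.empty) simp
qed

lemma power_card_eq_sum_Pow:
  fixes a :: "'b :: comm_semiring_1"
  assumes "finite A"
  shows "(1 + a) ^ card A = (\<Sum>S\<in>Pow A. a ^ card S)"
  using prod_add[OF assms, of "\<lambda>_. a" "\<lambda>_. 1"] by (simp add: add.commute)

lemma power_card_prime_divisors_eq_sum_Pow:
  fixes a :: "'b :: comm_semiring_1" and P :: "nat set"
  assumes "finite P" "\<And>p. p \<in> P \<Longrightarrow> prime p"
  shows "(1 + a) ^ card {p\<in>P. p dvd k} = (\<Sum>S\<in>Pow P. if \<Prod>S dvd k then a ^ card S else 0)"
proof -
  have "S \<subseteq> {p\<in>P. p dvd k} \<longleftrightarrow> S \<in> Pow P \<and> \<Prod>S dvd k" for S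
  proof (cases "S \<subseteq> P")
    case True
    then have "\<Prod>S dvd k \<longleftrightarrow> (\<forall>p\<in>S. p dvd k)"
      using assms(2) by (intro prod_primes_dvd_iff finite_subset[OF _ \<open>finite P\<close>]) auto
    with True show ?thesis
      by auto
  qed auto
  then have "Pow {p\<in>P. p dvd k} = {S\<in>Pow P. \<Prod>S dvd k}"
    by blast
  then have "(1 + a) ^ card {p\<in>P. p dvd k} = (\<Sum>S\<in>{S\<in>Pow P. \<Prod>S dvd k}. a ^ card S)"
    using power_card_eq_sum_Pow[of "{p\<in>P. p dvd k}" a] \<open>finite P\<close> by simp
  then show ?thesis
    using \<open>finite P\<close> by (simp only: sum.inter_filter finite_Pow_iff)
qed

lemma sum_divisors_power_card_prime_divisors_le:
  fixes f :: "nat \<Rightarrow> real" and P :: "nat set"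
  assumes "finite P" "\<And>p. p \<in> P \<Longrightarrow> prime p"
    and conv: "\<And>k. k \<ge> 1 \<Longrightarrow> one_conv f k \<le> real k"
    and "M > 0" "a \<ge> 0"
  shows "(\<Sum>n | n dvd M. f n * (1 + a) ^ card {p\<in>P. p dvd M div n})
           \<le> real M * (\<Prod>p\<in>P. 1 + a / real p)"
proof -
  let ?D = "{n. n dvd M}"
  have "finite ?D"
    using \<open>M > 0\<close> by simp
  have prime_S: "prime p" if "S \<in> Pow P" "p \<in> S" for S p
    using that assms(2) by blast
  have "(\<Sum>n\<in>?D. f n * (1 + a) ^ card {p\<in>P. p dvd M div n})
      = (\<Sum>n\<in>?D. \<Sum>S\<in>Pow P. if \<Prod>S dvd M div n then a ^ card S * f n else 0)"
    by (simp add: power_card_prime_divisors_eq_sum_Pow[OF assms(1,2)] sum_distrib_left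
        mult.commute if_distrib cong: if_cong)
  also have "\<dots> = (\<Sum>S\<in>Pow P. a ^ card S * (\<Sum>n | n dvd M \<and> \<Prod>S dvd M div n. f n))"
    using \<open>finite ?D\<close>
    by (subst sum.swap) (simp add: sum_distrib_left sum.inter_filter[symmetric] Collect_conj_eq)
  also have "\<dots> \<le> (\<Sum>S\<in>Pow P. a ^ card S * (real M / real (\<Prod>S)))"
    using \<open>M > 0\<close> \<open>a \<ge> 0\<close> prime_S
    by (intro sum_mono mult_left_mono sum_divisors_of_quotient_le[OF conv])
       (auto intro!: prod_pos dest: prime_gt_0_nat)
  also have "\<dots> = real M * (\<Sum>S\<in>Pow P. (\<Prod>p\<in>S. a / real p) * (\<Prod>p\<in>P - S. 1))"
    by (simp add: sum_distrib_left prod_dividef of_nat_prod mult.commute)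
  also have "\<dots> = real M * (\<Prod>p\<in>P. 1 + a / real p)"
    using prod_add[OF \<open>finite P\<close>, of "\<lambda>p. a / real p" "\<lambda>_. 1"] by (simp add: add.commute)
  finally show ?thesis .
qed

lemma rankin_trick:
  fixes f w :: "'a \<Rightarrow> real"
  assumes "finite D" "\<And>n. n \<in> D \<Longrightarrow> f n \<ge> 0" "C \<ge> 0"
  shows "(\<Sum>n | n \<in> D \<and> w n \<ge> K. f n) \<le> exp (- C * K) * (\<Sum>n\<in>D. f n * exp (C * w n))"
proof -
  have "(\<Sum>n | n \<in> D \<and> w n \<ge> K. f n) \<le> (\<Sum>n | n \<in> D \<and> w n \<ge> K. f n * exp (C * (w n - K)))"
  proof (rule sum_mono)
    fix n assume n: "n \<in> {n. n \<in> D \<and> w n \<ge> K}"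
    then have "1 \<le> exp (C * (w n - K))"
      using assms(3) by simp
    then show "f n \<le> f n * exp (C * (w n - K))"
      using assms(2) n mult_left_mono[of 1 _ "f n"] by simp
  qed
  also have "\<dots> \<le> (\<Sum>n\<in>D. f n * exp (C * (w n - K)))"
    using assms(1,2) by (intro sum_mono2) auto
  also have "\<dots> = exp (- C * K) * (\<Sum>n\<in>D. f n * exp (C * w n))"
    by (simp add: sum_distrib_left right_diff_distrib exp_diff exp_minus field_simps)
  finally show ?thesis .
qed

theorem lemma4p2:
  fixes C :: real
  assumes "C > 0"
  shows "\<exists>A. \<forall>(f :: nat \<Rightarrow> real) (M :: nat) (t :: real) (K :: real).
           multiplicative f \<longrightarrow> (\<forall>n\<ge>1. f n \<ge> 0) \<longrightarrow>
           (\<forall>n\<ge>1. one_conv f n \<le> real n) \<longrightarrow> M \<ge> 1 \<longrightarrow> t \<ge> 1 \<longrightarrow>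
           (\<Sum>n\<in>{n. n dvd M \<and>
                    real (card {p. prime p \<and> real p \<le> t \<and> p dvd (M div n)}) \<ge> K}. f n)
             \<le> A * real M * exp (- C * K) * Log t powr (exp C - 1)"
proof (intro exI[of _ "exp (5 * (exp C - 1))"] allI impI)
  fix f :: "nat \<Rightarrow> real" and M :: nat and t K :: real
  assume "multiplicative f" \<comment> \<open>unused: only the bound on \<open>one_conv f\<close> is needed\<close>
    and nonneg: "\<forall>n\<ge>1. f n \<ge> 0" and conv: "\<forall>n\<ge>1. one_conv f n \<le> real n"
    and "M \<ge> 1" "t \<ge> 1"
  define a where "a = exp C - 1"
  define P where "P = {p. prime p \<and> real p \<le> t}"
  define \<omega> where "\<omega> n = card {p. prime p \<and> real p \<le> t \<and> p dvd (M div n)}" for n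
  have "a \<ge> 0"
    using assms by (simp add: a_def)
  have f_nonneg: "f n \<ge> 0" if "n dvd M" for n
    using nonneg dvd_pos_nat[OF _ that] \<open>M \<ge> 1\<close> by (simp add: Suc_le_eq)
  have \<omega>_eq: "\<omega> n = card {p\<in>P. p dvd M div n}" for n
    unfolding \<omega>_def P_def by (metis mem_Collect_eq conj_assoc)
  have "(\<Sum>n | n dvd M \<and> real (\<omega> n) \<ge> K. f n)
      \<le> exp (- C * K) * (\<Sum>n | n dvd M. f n * exp (C * real (\<omega> n)))"
    using rankin_trick[of "{n. n dvd M}" f C K "\<lambda>n. real (\<omega> n)"] f_nonneg \<open>M \<ge> 1\<close> assms
    by simp
  also have "(\<Sum>n | n dvd M. f n * exp (C * real (\<omega> n)))
      = (\<Sum>n | n dvd M. f n * (1 + a) ^ card {p\<in>P. p dvd M div n})"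
    by (simp add: a_def \<omega>_eq exp_of_nat_mult[symmetric] mult.commute)
  also have "\<dots> \<le> real M * (\<Prod>p\<in>P. 1 + a / real p)"
    using conv \<open>M \<ge> 1\<close> \<open>a \<ge> 0\<close>
    by (intro sum_divisors_power_card_prime_divisors_le) (auto simp: P_def finite_primes_le)
  also have "\<dots> \<le> real M * (exp (5 * a) * Log t powr a)"
    using prod_one_plus_div_primes_le[OF \<open>a \<ge> 0\<close> \<open>t \<ge> 1\<close>] unfolding P_def
    by (intro mult_left_mono) auto
  finally show "(\<Sum>n | n dvd M \<and> real (\<omega> n) \<ge> K. f n)
      \<le> exp (5 * (exp C - 1)) * real M * exp (- C * K) * Log t powr (exp C - 1)"
    by (simp add: a_def mult_left_mono algebra_simps)
qed

end
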